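(* Let $c\in(0,1)$, $\delta>0$, and let $F$ be the distribution function on $[0,1]$ \[ F(x)=\begin{cases} c\,2^\delta x^\delta, & x\in[0,1/2],\\ 1-(1-c)\,2^\delta(1-x)^\delta, & x\in[1/2,1].\end{cases} \] Let $X_1,X_2,\dots$ be i.i.d. with distribution function $F$. Define $(Z_0,r_0)=(0,1)$ and, recursively, $K_n=[Z_n-r_n,Z_n+r_n]$, $p_{n+1}=2r_nX_{n+1}+Z_n-r_n$, $K_{n+1}=K_n\cap[p_{n+1}-1,p_{n+1}+1]$, with $Z_{n+1},r_{n+1}$ the center and half-length of $K_{n+1}$. Then $Z_n$ converges almost surely to a random variable $Z$ whose law has density \[ f_{\delta,c}(x)=\frac{\Gamma(\delta)}{\Gamma(\delta(1-c))\,\Gamma(\delta c)}\,\Big(\tfrac12+x\Big)^{\delta(1-c)-1}\Big(\tfrac12-x\Big)^{\delta c-1},\quad x\in(-1/2,1/2), \] i.e. $Z+1/2$ has the beta$(\delta(1-c),\delta c)$ distribution.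
   Context: $X_{n+1}$ is independent of $(Z_k,r_k)_{k\le n}$. For $\alpha,\beta>0$, the beta$(\alpha,\beta)$ law has density $x^{\alpha-1}(1-x)^{\beta-1}/B(\alpha,\beta)$ on $(0,1)$, with $B(\alpha,\beta)=\Gamma(\alpha)\Gamma(\beta)/\Gamma(\alpha+\beta)$. *)

theory Defs
  imports "HOL-Probability.Probability"
begin

definition Fdist :: "real \<Rightarrow> real \<Rightarrow> real \<Rightarrow> real" where
  "Fdist c \<delta> x =
     (if x < 0 then 0
      else if x \<le> 1/2 then c * 2 powr \<delta> * x powr \<delta>
      else if x \<le> 1 then 1 - (1 - c) * 2 powr \<delta> * (1 - x) powr \<delta>
      else 1)"

definition step :: "real \<times> real \<Rightarrow> real \<Rightarrow> real \<times> real" where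
  "step zr x = (let z = fst zr; r = snd zr; p = 2 * r * x + z - r;
                    lo = max (z - r) (p - 1); hi = min (z + r) (p + 1)
                in ((lo + hi) / 2, (hi - lo) / 2))"

text \<open>(Z_n, r_n) driven by the sequence xs, where xs (Suc n) is X_{n+1}.\<close>
fun Zr :: "(nat \<Rightarrow> real) \<Rightarrow> nat \<Rightarrow> real \<times> real" where
  "Zr xs 0 = (0, 1)"
| "Zr xs (Suc n) = step (Zr xs n) (xs (Suc n))"

definition f_dens :: "real \<Rightarrow> real \<Rightarrow> real \<Rightarrow> real" where
  "f_dens \<delta> c x =
     (if -1/2 < x \<and> x < 1/2 then
        Gamma \<delta> / (Gamma (\<delta> * (1 - c)) * Gamma (\<delta> * c))
        * (1/2 + x) powr (\<delta> * (1 - c) - 1) * (1/2 - x) powr (\<delta> * c - 1)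
      else 0)"

end

theory Submission
  imports Defs
begin

(* Write K_n = [Z_n - r_n, Z_n + r_n] and J_n = [Z_n - r_n + 1, Z_n + r_n], i.e. K_n shifted by
   1/2 and shrunk by 1/2 at each end; the midpoint of J_n is Z_n + 1/2.  A step of the recursion
   either leaves the state unchanged or cuts off one side of J_n, so the J_n are nested.

   Place a point in J_n at a relative position drawn
   from an independent beta(a, b) law with a = delta (1 - c), b = delta c.  Then the law of this
   point does not depend on n: averaging over the next sample X_{n+1} turns the point of J_{n+1}
   into a point of J_n with the same law (the invariance identity integral_cut_kernel, where the
   special choice of a and b enters).  Hence Phi_t(J_n), the probability that this point is
   <= t, has expectation equal to the beta distribution function at t for every n. *)

section \<open>One step of the interval recursion\<close>

text \<open>For a state \<open>(z, r)\<close> the interval \<open>J = [jleft, jleft + jwidth]\<close> is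
  \<open>K = [z - r, z + r]\<close> shifted by \<open>1/2\<close> and shrunk by \<open>1/2\<close> at each end.\<close>

definition jleft :: "real \<times> real \<Rightarrow> real" where "jleft s = fst s - snd s + 1"
definition jwidth :: "real \<times> real \<Rightarrow> real" where "jwidth s = 2 * snd s - 1"
definition admissible :: "real \<times> real \<Rightarrow> bool" where
  "admissible s \<longleftrightarrow> 1/2 \<le> snd s \<and> snd s \<le> 1"

lemma admissible_iff_jwidth: "admissible s \<longleftrightarrow> 0 \<le> jwidth s \<and> jwidth s \<le> 1"
  by (auto simp: admissible_def jwidth_def)

lemma fst_eq_midpoint: "fst s = jleft s + jwidth s / 2 - 1/2"
  by (simp add: jleft_def jwidth_def field_simps)

lemma step_cut_right:
  assumes "admissible s" "0 \<le> x" "2 * snd s * x < jwidth s"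
  shows "jleft (step s x) = jleft s" "jwidth (step s x) = 2 * snd s * x"
proof -
  obtain z r where s: "s = (z, r)" by (cases s)
  have h: "2*r*x < 2*r - 1" "1/2 \<le> r" "r \<le> 1"
    using assms by (auto simp: s jwidth_def admissible_def)
  have "max (z - r) (2*r*x + z - r - 1) = z - r" "min (z + r) (2*r*x + z - r + 1) = 2*r*x + z - r + 1"
    using h by auto
  then show "jleft (step s x) = jleft s" "jwidth (step s x) = 2 * snd s * x"
    by (auto simp: s step_def jleft_def jwidth_def Let_def field_simps)
qed

lemma step_cut_left:
  assumes "admissible s" "x \<le> 1" "1 < 2 * snd s * x"
  shows "jleft (step s x) = jleft s + 2 * snd s * x - 1"
    "jwidth (step s x) = 2 * snd s - 2 * snd s * x"
proof -
  obtain z r where s: "s = (z, r)" by (cases s)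
  have h: "2*r*x > 1" "1/2 \<le> r" "r \<le> 1" "x \<le> 1"
    using assms by (auto simp: s admissible_def)
  have "max (z - r) (2*r*x + z - r - 1) = 2*r*x + z - r - 1" "min (z + r) (2*r*x + z - r + 1) = z + r"
    using h by auto
  then show "jleft (step s x) = jleft s + 2 * snd s * x - 1"
    "jwidth (step s x) = 2 * snd s - 2 * snd s * x"
    by (auto simp: s step_def jleft_def jwidth_def Let_def field_simps)
qed

lemma step_keep:
  assumes "jwidth s \<le> 2 * snd s * x" "2 * snd s * x \<le> 1"
  shows "step s x = s"
proof -
  obtain z r where s: "s = (z, r)" by (cases s)
  have h: "2*r*x \<ge> 2*r - 1" "2*r*x \<le> 1" using assms by (auto simp: s jwidth_def)
  have "max (z - r) (2*r*x + z - r - 1) = z - r" "min (z + r) (2*r*x + z - r + 1) = z + r"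
    using h by auto
  then show ?thesis by (auto simp: s step_def Let_def field_simps)
qed

lemma step_shrinks:
  assumes "admissible s" "0 \<le> x" "x \<le> 1"
  shows "admissible (step s x)" "jleft s \<le> jleft (step s x)"
    "jleft (step s x) + jwidth (step s x) \<le> jleft s + jwidth s" "jwidth (step s x) \<le> jwidth s"
proof -
  have r: "1/2 \<le> snd s" "snd s \<le> 1" using assms(1) by (auto simp: admissible_def)
  have u: "jwidth s = 2 * snd s - 1" by (simp add: jwidth_def)
  consider "2 * snd s * x < jwidth s" | "1 < 2 * snd s * x"
    | "jwidth s \<le> 2 * snd s * x \<and> 2 * snd s * x \<le> 1"
    by linarith
  then have "admissible (step s x) \<and> jleft s \<le> jleft (step s x) \<and>
    jleft (step s x) + jwidth (step s x) \<le> jleft s + jwidth s \<and> jwidth (step s x) \<le> jwidth s"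
  proof cases
    case 1
    have "0 \<le> 2 * snd s * x" using r assms by simp
    with 1 show ?thesis
      using step_cut_right[OF assms(1,2) 1] assms u r by (auto simp: admissible_iff_jwidth)
  next
    case 2
    have "2 * snd s * x \<le> 2 * snd s" using r assms by simp
    with 2 show ?thesis
      using step_cut_left[OF assms(1,3) 2] assms u r by (auto simp: admissible_iff_jwidth)
  next
    case 3
    then show ?thesis using step_keep[of s x] assms by auto
  qed
  then show "admissible (step s x)" "jleft s \<le> jleft (step s x)"
    "jleft (step s x) + jwidth (step s x) \<le> jleft s + jwidth s" "jwidth (step s x) \<le> jwidth s"
    by auto
qed

lemma Zr_nested:
  assumes "\<And>k. 1 \<le> k \<Longrightarrow> 0 \<le> xs k \<and> xs k \<le> 1"
  shows "admissible (Zr xs n)" "incseq (\<lambda>n. jleft (Zr xs n))" "decseq (\<lambda>n. jwidth (Zr xs n))"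
    "decseq (\<lambda>n. jleft (Zr xs n) + jwidth (Zr xs n))"
proof -
  have adm: "admissible (Zr xs n)" for n
  proof (induction n)
    case (Suc n)
    then show ?case using step_shrinks(1)[OF Suc, of "xs (Suc n)"] assms[of "Suc n"] by simp
  qed (auto simp: admissible_def)
  then show "admissible (Zr xs n)" .
  show "incseq (\<lambda>n. jleft (Zr xs n))"
    by (rule incseq_SucI) (use step_shrinks adm assms in auto)
  show "decseq (\<lambda>n. jwidth (Zr xs n))"
    by (rule decseq_SucI) (use step_shrinks adm assms in auto)
  show "decseq (\<lambda>n. jleft (Zr xs n) + jwidth (Zr xs n))"
    by (rule decseq_SucI) (use step_shrinks adm assms in auto)
qed

lemma step_point:
  assumes "admissible s" "0 \<le> x" "x \<le> 1"
  shows "jleft (step s x) + jwidth (step s x) * w =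
    (if 2 * snd s * x < jwidth s then jleft s + 2 * snd s * x * w
     else if 1 < 2 * snd s * x then jleft s + 2 * snd s * x - 1 + (2 * snd s - 2 * snd s * x) * w
     else jleft s + jwidth s * w)"
  using step_cut_right[OF assms(1,2)] step_cut_left[OF assms(1,3)] step_keep by auto

lemma step_point_le_iff:
  assumes s: "admissible s" "0 < jwidth s" and w: "0 < w" "w < 1" and x: "0 \<le> x" "x \<le> 1"
  defines "v \<equiv> jwidth s / (2 * snd s)"
  shows "jleft (step s x) + jwidth (step s x) * w \<le> jleft s + jwidth s * s0 \<longleftrightarrow>
    (x < v \<and> x \<le> v * (s0 / w)) \<or> (v \<le> x \<and> x \<le> 1 - v \<and> w \<le> s0) \<or>
    (1 - v < x \<and> x \<le> 1 - v * ((1 - s0) / (1 - w)))"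
proof -
  define L where "L = 2 * snd s"
  define u where "u = jwidth s"
  have uL: "u = L - 1" and L: "1 \<le> L" "L \<le> 2" and u: "0 < u"
    using s by (auto simp: u_def L_def jwidth_def admissible_def)
  have v: "v = u / L" "1 - v = 1 / L" using L uL by (auto simp: v_def u_def L_def field_simps)
  have e1: "L * x < u \<longleftrightarrow> x < v" "1 < L * x \<longleftrightarrow> 1 - v < x" "u \<le> L * x \<longleftrightarrow> v \<le> x"
    "L * x \<le> 1 \<longleftrightarrow> x \<le> 1 - v"
    using L by (auto simp: v uL field_simps)
  have e2: "L * x * w \<le> u * s0 \<longleftrightarrow> x \<le> v * (s0 / w)"
    using L w by (simp add: v field_simps)
  have e3: "L * x - 1 + (L - L * x) * w \<le> u * s0 \<longleftrightarrow> x \<le> 1 - v * ((1 - s0) / (1 - w))"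
  proof -
    have "L * x - 1 + (L - L * x) * w \<le> u * s0 \<longleftrightarrow> u * (1 - s0) \<le> (L * (1 - w)) * (1 - x)"
      by (simp add: algebra_simps uL)
    also have "\<dots> \<longleftrightarrow> v * ((1 - s0) / (1 - w)) \<le> 1 - x"
      using L w by (simp add: v field_simps)
    finally show ?thesis by linarith
  qed
  have vh: "v \<le> 1 - v" using L by (simp add: v uL field_simps)
  have e4: "u * w \<le> u * s0 \<longleftrightarrow> w \<le> s0" using u by simp
  show ?thesis
    using step_point[OF s(1) x, of w] e1 e2 e3 e4 vh unfolding L_def[symmetric] u_def[symmetric]
    by (auto split: if_splits)
qed

text \<open>A sample \<open>x \<le> jwidth / (4 r)\<close> places the new point \<open>2 r x\<close> in the lower half of the
  range of \<open>J\<close> and therefore cuts away at least half of \<open>J\<close>; \<open>quarter_gain\<close> records this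
  guaranteed loss of width.\<close>
definition quarter_gain :: "real \<times> real \<Rightarrow> real \<Rightarrow> real" where
  "quarter_gain s x = jwidth s / 2 * indicator {..jwidth s / (4 * snd s)} x"

lemma step_width_drop:
  assumes s: "admissible s" and x: "0 \<le> x" "x \<le> 1"
  shows "jwidth (step s x) + quarter_gain s x \<le> jwidth s"
proof (cases "x \<le> jwidth s / (4 * snd s) \<and> 0 < jwidth s")
  case True
  have r: "1/2 \<le> snd s" using s by (simp add: admissible_def)
  then have "2 * snd s * x \<le> jwidth s / 2"
    using True by (simp add: pos_le_divide_eq algebra_simps)
  moreover from this have "jwidth (step s x) = 2 * snd s * x"
    using True by (intro step_cut_right[OF s x(1)]) linarith
  ultimately show ?thesis using True by (simp add: quarter_gain_def)
next
  case False
  then have "quarter_gain s x = 0"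
    using s by (auto simp: quarter_gain_def indicator_def admissible_iff_jwidth)
  then show ?thesis using step_shrinks(4)[OF s x] by linarith
qed

lemma quarter_gain_nonneg: "admissible s \<Longrightarrow> 0 \<le> quarter_gain s x"
  by (simp add: quarter_gain_def admissible_iff_jwidth)

lemma Zr_cong: "(\<And>k. 1 \<le> k \<Longrightarrow> k \<le> n \<Longrightarrow> xs k = ys k) \<Longrightarrow> Zr xs n = Zr ys n"
  by (induction n) auto

lemma measurable_step[measurable]:
  assumes f: "f \<in> borel_measurable M" and g[measurable]: "g \<in> borel_measurable M"
  shows "(\<lambda>\<omega>. step (f \<omega>) (g \<omega>) :: real \<times> real) \<in> borel_measurable M"
proof -
  have f'[measurable]: "f \<in> M \<rightarrow>\<^sub>M borel \<Otimes>\<^sub>M borel" using f by (simp add: borel_prod)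
  have "(\<lambda>\<omega>. step (f \<omega>) (g \<omega>)) \<in> M \<rightarrow>\<^sub>M borel \<Otimes>\<^sub>M borel"
    unfolding step_def Let_def by measurable
  then show ?thesis by (simp add: borel_prod)
qed

lemma measurable_jleft[measurable]:
  "f \<in> borel_measurable N \<Longrightarrow> (\<lambda>x. jleft (f x)) \<in> borel_measurable N"
  and measurable_jwidth[measurable]:
  "f \<in> borel_measurable N \<Longrightarrow> (\<lambda>x. jwidth (f x)) \<in> borel_measurable N"
  unfolding jleft_def jwidth_def by (simp_all add: borel_prod[symmetric])

lemma measurable_quarter_gain[measurable]:
  assumes f: "f \<in> borel_measurable N" and [measurable]: "g \<in> borel_measurable N"
  shows "(\<lambda>x. quarter_gain (f x) (g x)) \<in> borel_measurable N"
proof -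
  have [measurable]: "f \<in> N \<rightarrow>\<^sub>M borel \<Otimes>\<^sub>M borel" using f by (simp add: borel_prod)
  show ?thesis unfolding quarter_gain_def jwidth_def indicator_def atMost_iff by measurable
qed

section \<open>The beta law\<close>

definition beta_density :: "real \<Rightarrow> real \<Rightarrow> real \<Rightarrow> real" where
  "beta_density a b w =
     (if 0 < w \<and> w < 1 then w powr (a - 1) * (1 - w) powr (b - 1) / Beta a b else 0)"

definition beta_law :: "real \<Rightarrow> real \<Rightarrow> real measure" where
  "beta_law a b = density lborel (\<lambda>w. ennreal (beta_density a b w))"

lemma sets_beta_law[measurable_cong, simp]: "sets (beta_law a b) = sets borel"
  by (simp add: beta_law_def)

lemma space_beta_law[simp]: "space (beta_law a b) = UNIV"
  by (simp add: beta_law_def)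

lemma measurable_beta_density[measurable]: "beta_density a b \<in> borel_measurable borel"
  unfolding beta_density_def by measurable

lemma Beta_real_pos: "0 < a \<Longrightarrow> 0 < b \<Longrightarrow> 0 < Beta a (b::real)"
  by (simp add: Beta_def)

lemma beta_density_nonneg: "0 < a \<Longrightarrow> 0 < b \<Longrightarrow> 0 \<le> beta_density a b w"
  using Beta_real_pos[of a b] by (simp add: beta_density_def)

locale beta_params =
  fixes a b :: real
  assumes a_pos: "0 < a" and b_pos: "0 < b"
begin

abbreviation "\<beta> \<equiv> beta_law a b"

lemma prob_space_beta: "prob_space \<beta>"
proof (rule prob_spaceI)
  have "(\<integral>\<^sup>+w. ennreal (indicator {0..1} w * (w powr (a - 1) * (1 - w) powr (b - 1))) \<partial>lborel)
      = ennreal (Beta a b)"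
    by (rule nn_integral_has_integral_lebesgue[OF _ has_integral_Beta_real[OF a_pos b_pos]]) auto
  moreover have "(\<integral>\<^sup>+w. ennreal (beta_density a b w) \<partial>lborel) =
      (\<integral>\<^sup>+w. ennreal (indicator {0..1} w * (w powr (a - 1) * (1 - w) powr (b - 1))) *
         ennreal (1 / Beta a b) \<partial>lborel)"
    using Beta_real_pos[OF a_pos b_pos]
    by (intro nn_integral_cong) (auto simp: beta_density_def ennreal_mult'[symmetric] indicator_def)
  ultimately have "(\<integral>\<^sup>+w. ennreal (beta_density a b w) \<partial>lborel) = ennreal (Beta a b) * ennreal (1 / Beta a b)"
    by (simp add: nn_integral_multc)
  then show "emeasure \<beta> (space \<beta>) = 1"
    using Beta_real_pos[OF a_pos b_pos]
    by (simp add: beta_law_def emeasure_density ennreal_mult'[symmetric])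
qed

sublocale beta: real_distribution \<beta>
  by (simp add: real_distribution_def real_distribution_axioms_def prob_space_beta)

lemma AE_beta: "AE w in \<beta>. 0 < w \<and> w < 1"
  unfolding beta_law_def
  by (subst AE_density) (auto intro!: AE_I2 simp: beta_density_def split: if_splits)

lemma beta_singleton: "measure \<beta> {w} = 0"
  unfolding beta_law_def measure_def
  by (subst emeasure_density) (auto intro!: nn_integral_null_set)

lemma beta_lessThan_atMost: "measure \<beta> {..<s} = measure \<beta> {..s}"
proof -
  have "measure \<beta> ({..<s} \<union> {s}) = measure \<beta> {..<s} + measure \<beta> {s}"
    by (rule beta.finite_measure_Union) auto
  moreover have "{..<s} \<union> {s} = {..s}" by auto
  ultimately show ?thesis by (simp add: beta_singleton)
qed

lemma integral_beta: "f \<in> borel_measurable borel \<Longrightarrow>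
    integral\<^sup>L \<beta> f = integral\<^sup>L lborel (\<lambda>w. beta_density a b w * f w)"
  unfolding beta_law_def
  by (subst integral_density) (auto simp: beta_density_nonneg[OF a_pos b_pos])

lemma integrable_beta_bounded:
  assumes [measurable]: "f \<in> borel_measurable borel"
    and bound: "\<And>w. 0 < w \<Longrightarrow> w < 1 \<Longrightarrow> \<bar>f w\<bar> \<le> (K::real)"
  shows "integrable \<beta> f"
  by (rule beta.integrable_const_bound[where B=K]) (use AE_beta bound in auto)

end

lemma integral_lborel_FTC:
  fixes G g :: "real \<Rightarrow> real"
  assumes ab: "a \<le> b" and cont: "continuous_on {a..b} G"
    and der: "\<And>x. x \<in> {a<..<b} \<Longrightarrow> (G has_real_derivative g x) (at x)"
    and nonneg: "\<And>x. x \<in> {a..b} \<Longrightarrow> 0 \<le> g x"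
    and [measurable]: "g \<in> borel_measurable borel"
  shows "integral\<^sup>L lborel (\<lambda>x. indicator {a..b} x * g x) = G b - G a"
proof -
  have hi: "(g has_integral (G b - G a)) {a..b}"
    using fundamental_theorem_of_calculus_interior[OF ab cont] der
    by (simp add: has_real_derivative_iff_has_vector_derivative)
  have "(\<integral>\<^sup>+x. ennreal (indicator {a..b} x * g x) \<partial>lborel) = ennreal (G b - G a)"
    using nn_integral_has_integral_lebesgue[OF nonneg hi] by simp
  moreover have "0 \<le> G b - G a" using has_integral_nonneg[OF hi] nonneg by simp
  moreover have "integral\<^sup>L lborel (\<lambda>x. indicator {a..b} x * g x) =
      enn2real (\<integral>\<^sup>+x. ennreal (indicator {a..b} x * g x) \<partial>lborel)"
    by (rule integral_eq_nn_integral) (use nonneg in \<open>auto intro!: AE_I2 simp: indicator_def\<close>)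
  ultimately show ?thesis by simp
qed

context beta_params
begin

text \<open>Two explicit integrals against the beta law, used for the invariance identity.  Both
  follow from the antiderivatives \<open>-((1-w)/w)^b / b\<close> and \<open>(w/(1-w))^a / a\<close>.\<close>

lemma integral_beta_upper:
  assumes s: "0 < s" "s < 1"
  shows "integral\<^sup>L \<beta> (\<lambda>w. indicator {s<..} w * w powr (-(a+b))) =
    (1-s) powr b * s powr (-b) / (b * Beta a b)"
proof -
  define G where "G w = - (((1-w)/w) powr b) / b" for w
  define g where "g w = w powr (-b-1) * (1-w) powr (b-1)" for w
  have cont: "continuous_on {s..1} G" unfolding G_def using s b_pos
    by (auto intro!: continuous_intros continuous_on_powr')
  have der: "(G has_real_derivative g x) (at x)" if x: "x \<in> {s<..<1}" for x
  proof -
    have x0: "0 < x" "x < 1" using x s by auto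
    have d1: "((\<lambda>w. (1-w)/w) has_real_derivative (-1/x^2)) (at x)"
      using x0 by (auto intro!: derivative_eq_intros simp: field_simps power2_eq_square)
    have d2: "((\<lambda>w. ((1-w)/w) powr b) has_real_derivative (b * ((1-x)/x) powr (b-1)) * (-1/x^2)) (at x)"
      by (rule DERIV_chain2[OF has_real_derivative_powr d1]) (use x0 in simp)
    have "x powr (-b-1) * x powr (b - 1) * x powr 2 = x powr (-b-1 + (b - 1) + 2)"
      by (simp only: powr_add)
    also have "\<dots> = 1" using x0 by simp
    finally have "x powr (-b-1) = 1 / (x powr (b - 1) * x^2)"
      using x0 by (simp add: powr_numeral field_simps)
    then have "(-1/b) * ((b * ((1-x)/x) powr (b-1)) * (-1/x^2)) = g x"
      using b_pos x0 by (simp add: g_def powr_divide)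
    with DERIV_cmult[OF d2, of "-1/b"] show ?thesis unfolding G_def by (simp add: field_simps)
  qed
  have "integral\<^sup>L \<beta> (\<lambda>w. indicator {s<..} w * w powr (-(a+b))) =
      integral\<^sup>L lborel (\<lambda>w. beta_density a b w * (indicator {s<..} w * w powr (-(a+b))))"
    by (rule integral_beta) measurable
  also have "\<dots> = integral\<^sup>L lborel (\<lambda>w. (indicator {s..1} w * g w) / Beta a b)"
  proof (rule integral_cong_AE)
    show "AE w in lborel. beta_density a b w * (indicator {s<..} w * w powr (-(a+b))) =
        indicator {s..1} w * g w / Beta a b"
      using AE_lborel_singleton[of s]
    proof (rule AE_mp, intro AE_I2 impI)
      fix w :: real assume "w \<noteq> s"
      moreover have "a - 1 + -(a+b) = -b-1" by simp
      then have "w powr (a - 1) * w powr (-(a+b)) = w powr (-b-1)"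
        by (simp only: powr_add[symmetric])
      ultimately show "beta_density a b w * (indicator {s<..} w * w powr (-(a+b))) =
          indicator {s..1} w * g w / Beta a b"
        using s by (auto simp: beta_density_def g_def indicator_def field_simps)
    qed
  qed (auto simp: g_def)
  also have "\<dots> = (G 1 - G s) / Beta a b"
    using integral_lborel_FTC[OF _ cont der] s by (simp add: g_def)
  also have "\<dots> = (1-s) powr b * s powr (-b) / (b * Beta a b)"
    using s by (simp add: G_def powr_divide powr_minus_divide)
  finally show ?thesis .
qed

lemma integral_beta_lower:
  assumes s: "0 < s" "s < 1"
  shows "integral\<^sup>L \<beta> (\<lambda>w. indicator {..<s} w * (1-w) powr (-(a+b))) =
    s powr a * (1-s) powr (-a) / (a * Beta a b)"
proof -
  define G where "G w = ((w/(1-w)) powr a) / a" for w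
  define g where "g w = w powr (a-1) * (1-w) powr (-a-1)" for w
  have cont: "continuous_on {0..s} G" unfolding G_def using s a_pos
    by (auto intro!: continuous_intros continuous_on_powr')
  have der: "(G has_real_derivative g x) (at x)" if x: "x \<in> {0<..<s}" for x
  proof -
    have x0: "0 < x" "x < 1" using x s by auto
    have d1: "((\<lambda>w. w/(1-w)) has_real_derivative (1/(1-x)^2)) (at x)"
      using x0 by (auto intro!: derivative_eq_intros simp: field_simps power2_eq_square)
    have d2: "((\<lambda>w. (w/(1-w)) powr a) has_real_derivative (a * (x/(1-x)) powr (a-1)) * (1/(1-x)^2)) (at x)"
      by (rule DERIV_chain2[OF has_real_derivative_powr d1]) (use x0 in simp)
    have "(1-x) powr (-a-1) * (1-x) powr (a - 1) * (1-x) powr 2 = (1-x) powr (-a-1 + (a - 1) + 2)"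
      by (simp only: powr_add)
    also have "\<dots> = 1" using x0 by simp
    finally have "(1-x) powr (-a-1) = 1 / ((1-x) powr (a - 1) * (1-x)^2)"
      using x0 by (simp add: powr_numeral field_simps)
    then have "(1/a) * ((a * (x/(1-x)) powr (a-1)) * (1/(1-x)^2)) = g x"
      using a_pos x0 by (simp add: g_def powr_divide)
    with DERIV_cmult[OF d2, of "1/a"] show ?thesis unfolding G_def by (simp add: field_simps)
  qed
  have "integral\<^sup>L \<beta> (\<lambda>w. indicator {..<s} w * (1-w) powr (-(a+b))) =
      integral\<^sup>L lborel (\<lambda>w. beta_density a b w * (indicator {..<s} w * (1-w) powr (-(a+b))))"
    by (rule integral_beta) measurable
  also have "\<dots> = integral\<^sup>L lborel (\<lambda>w. (indicator {0..s} w * g w) / Beta a b)"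
  proof (rule integral_cong_AE)
    show "AE w in lborel. beta_density a b w * (indicator {..<s} w * (1-w) powr (-(a+b))) =
        indicator {0..s} w * g w / Beta a b"
      using AE_lborel_singleton[of s]
    proof (rule AE_mp, intro AE_I2 impI)
      fix w :: real assume "w \<noteq> s"
      moreover have "b - 1 + -(a+b) = -a-1" by simp
      then have "(1-w) powr (b - 1) * (1-w) powr (-(a+b)) = (1-w) powr (-a-1)"
        by (simp only: powr_add[symmetric])
      ultimately show "beta_density a b w * (indicator {..<s} w * (1-w) powr (-(a+b))) =
          indicator {0..s} w * g w / Beta a b"
        using s by (auto simp: beta_density_def g_def indicator_def field_simps)
    qed
  qed (auto simp: g_def)
  also have "\<dots> = (G s - G 0) / Beta a b"
    using integral_lborel_FTC[OF _ cont der] s by (simp add: g_def)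
  also have "\<dots> = s powr a * (1-s) powr (-a) / (a * Beta a b)"
    using s by (simp add: G_def powr_divide powr_minus_divide)
  finally show ?thesis .
qed

end

section \<open>The distribution function \<open>F\<close> and the invariance identity\<close>

locale params =
  fixes c \<delta> :: real
  assumes c_pos: "0 < c" and c_less_1: "c < 1" and \<delta>_pos: "0 < \<delta>"
begin

text \<open>The limit law is \<open>beta(aa, bb)\<close>; note \<open>aa + bb = \<delta>\<close> and \<open>c / bb = (1 - c) / aa\<close>.\<close>
definition aa :: real where "aa = \<delta> * (1 - c)"
definition bb :: real where "bb = \<delta> * c"

lemma aa_pos: "0 < aa" and bb_pos: "0 < bb" and aa_plus_bb: "aa + bb = \<delta>"
  using c_pos c_less_1 \<delta>_pos by (auto simp: aa_def bb_def algebra_simps)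

sublocale beta_params aa bb
  by unfold_locales (fact aa_pos bb_pos)+

lemma f_dens_eq_beta_density: "f_dens \<delta> c x = beta_density aa bb (x + 1/2)"
proof -
  have "1/2 - x = 1 - (x + 1/2)" "1/2 + x = x + 1/2" by simp_all
  then show ?thesis
    unfolding f_dens_def beta_density_def Beta_def using aa_plus_bb
    by (simp add: aa_def bb_def field_simps)
qed

abbreviation F :: "real \<Rightarrow> real" where "F \<equiv> Fdist c \<delta>"

lemma continuous_F: "continuous_on UNIV F"
proof -
  have half: "2 powr \<delta> * (1/2) powr \<delta> = 1" by (simp flip: powr_mult)
  have "continuous_on {..0} F"
    by (rule continuous_on_eq[where f="\<lambda>_. 0"]) (auto simp: Fdist_def)
  moreover have "continuous_on {0..1/2} F"
    by (rule continuous_on_eq[where f="\<lambda>x. c * 2 powr \<delta> * x powr \<delta>"])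
       (use \<delta>_pos in \<open>auto simp: Fdist_def intro!: continuous_intros continuous_on_powr'\<close>)
  moreover have "continuous_on {1/2..1} F"
  proof (rule continuous_on_eq[where f="\<lambda>x. 1 - (1-c) * 2 powr \<delta> * (1-x) powr \<delta>"])
    show "continuous_on {1/2..1} (\<lambda>x. 1 - (1-c) * 2 powr \<delta> * (1-x) powr \<delta>)"
      using \<delta>_pos by (auto intro!: continuous_intros continuous_on_powr')
    fix x :: real assume x: "x \<in> {1/2..1}"
    show "1 - (1-c) * 2 powr \<delta> * (1-x) powr \<delta> = F x"
    proof (cases "x = 1/2")
      case True
      have "1 - (1-c) * 2 powr \<delta> * (1/2) powr \<delta> = c * 2 powr \<delta> * (1/2) powr \<delta>"
        using half by (simp add: algebra_simps)
      then show ?thesis unfolding True by (simp add: Fdist_def)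
    qed (use x in \<open>auto simp: Fdist_def\<close>)
  qed
  moreover have "continuous_on {1..} F"
    by (rule continuous_on_eq[where f="\<lambda>_. 1"]) (use \<delta>_pos in \<open>auto simp: Fdist_def\<close>)
  ultimately have "continuous_on ({..0} \<union> {0..1/2} \<union> {1/2..1} \<union> {1..}) F"
    by (intro continuous_on_closed_Un) auto
  moreover have "{..0} \<union> {0..1/2} \<union> {1/2..1} \<union> {1..} = (UNIV :: real set)" by auto
  ultimately show ?thesis by simp
qed

lemma F_low: "0 \<le> q \<Longrightarrow> q \<le> 1/2 \<Longrightarrow> F q = c * (2*q) powr \<delta>"
  by (auto simp: Fdist_def powr_mult)

lemma F_high: "0 \<le> q \<Longrightarrow> q \<le> 1/2 \<Longrightarrow> F (1-q) = 1 - (1-c) * (2*q) powr \<delta>"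
proof (cases "q = 1/2")
  case True
  have "c * 2 powr \<delta> * (1/2) powr \<delta> = 1 - (1-c)"
    by (simp flip: powr_mult)
  moreover have "1 - (1/2::real) = 1/2" "2 * (1/2::real) = 1" by simp_all
  ultimately show ?thesis unfolding True by (simp add: Fdist_def)
qed (auto simp: Fdist_def powr_mult)

text \<open>Lower bound for the expected guaranteed loss of width \<open>quarter_gain\<close>, whose value is
  \<open>jwidth / 2 * F (jwidth / (4 r))\<close> (cf. \<open>nn_integral_quarter_gain\<close>).\<close>
lemma F_quarter_bound:
  assumes s: "admissible s"
  shows "c * (jwidth s / 2) powr (1 + \<delta>) \<le> jwidth s / 2 * F (jwidth s / (4 * snd s))"
proof -
  have r: "1/2 \<le> snd s" "snd s \<le> 1" using s by (auto simp: admissible_def)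
  have u: "0 \<le> jwidth s" "jwidth s \<le> 1" using s by (auto simp: admissible_iff_jwidth)
  define q where "q = jwidth s / (4 * snd s)"
  have q: "0 \<le> q" "q \<le> 1/2" using r u by (auto simp: q_def field_simps)
  have "jwidth s / 2 \<le> jwidth s / (2 * snd s)"
    by (rule divide_left_mono) (use r u in auto)
  then have "jwidth s / 2 \<le> 2 * q" by (simp add: q_def)
  then have "c * (jwidth s / 2) powr \<delta> \<le> F q"
    using F_low[OF q] c_pos u \<delta>_pos by (auto intro!: powr_mono2)
  then have "jwidth s / 2 * (c * (jwidth s / 2) powr \<delta>) \<le> jwidth s / 2 * F q"
    using u by (intro mult_left_mono) auto
  moreover have "(jwidth s / 2) powr (1 + \<delta>) = jwidth s / 2 * (jwidth s / 2) powr \<delta>"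
    using u by (simp add: powr_add)
  ultimately show ?thesis by (simp add: q_def algebra_simps)
qed

text \<open>For a threshold at relative position \<open>s0\<close> of \<open>J\<close>, \<open>cut_kernel s0 w\<close> is the conditional
  probability, given that the next sample cuts \<open>J\<close>, that the point at relative position \<open>w\<close> of
  the new interval lies below the threshold (see \<open>step_kernel\<close>).\<close>
definition cut_kernel :: "real \<Rightarrow> real \<Rightarrow> real" where
  "cut_kernel s0 w = c * (min 1 (s0/w)) powr \<delta>
     + indicator {..<s0} w * (1-c) * (1 - ((1-s0)/(1-w)) powr \<delta>)"

lemma measurable_cut_kernel[measurable]: "cut_kernel s0 \<in> borel_measurable borel"
  unfolding cut_kernel_def by measurable

lemma cut_kernel_bounded:
  assumes "0 \<le> s0" "s0 < 1" "0 < w" "w < 1"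
  shows "\<bar>cut_kernel s0 w\<bar> \<le> 1"
proof -
  have "0 \<le> (min 1 (s0/w)) powr \<delta>" "(min 1 (s0/w)) powr \<delta> \<le> 1"
    using assms \<delta>_pos by (auto intro!: powr_le1)
  moreover have "w < s0 \<Longrightarrow> ((1-s0)/(1-w)) powr \<delta> \<le> 1"
    using assms \<delta>_pos by (auto intro!: powr_le1)
  moreover have "0 \<le> ((1-s0)/(1-w)) powr \<delta>" by simp
  ultimately have "0 \<le> c * (min 1 (s0/w)) powr \<delta>" "c * (min 1 (s0/w)) powr \<delta> \<le> c"
      "0 \<le> indicator {..<s0} w * (1-c) * (1 - ((1-s0)/(1-w)) powr \<delta>)"
      "indicator {..<s0} w * (1-c) * (1 - ((1-s0)/(1-w)) powr \<delta>) \<le> 1 - c"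
    using c_pos c_less_1 by (auto simp: indicator_def intro: mult_left_le mult_nonneg_nonneg)
  then show ?thesis by (simp add: cut_kernel_def abs_le_iff)
qed

lemma cut_kernel_split:
  assumes s0: "0 < s0" "s0 < 1" and w: "0 < w" "w < 1"
  shows "cut_kernel s0 w =
    c * indicator {..s0} w + (c * s0 powr \<delta>) * (indicator {s0<..} w * w powr (-\<delta>)) +
    (1-c) * indicator {..<s0} w - ((1-c) * (1-s0) powr \<delta>) * (indicator {..<s0} w * (1-w) powr (-\<delta>))"
proof -
  have "(s0/w) powr \<delta> = s0 powr \<delta> * w powr (-\<delta>)"
    "((1-s0)/(1-w)) powr \<delta> = (1-s0) powr \<delta> * (1-w) powr (-\<delta>)"
    using s0 w by (simp_all add: powr_divide powr_minus_divide)
  moreover have "min 1 (s0/w) = (if w \<le> s0 then 1 else s0/w)"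
    using s0 w by (auto simp: field_simps)
  ultimately show ?thesis
    by (auto simp: cut_kernel_def indicator_def algebra_simps)
qed

text \<open>The two power-function contributions cancel; this is where the specific beta parameters
  \<open>aa = \<delta> (1 - c)\<close> and \<open>bb = \<delta> c\<close> are forced.\<close>
lemma tail_balance:
  assumes s0: "0 < s0" "s0 < 1"
  shows "(c * s0 powr \<delta>) * ((1-s0) powr bb * s0 powr (-bb) / (bb * Beta aa bb)) =
     ((1-c) * (1-s0) powr \<delta>) * (s0 powr aa * (1-s0) powr (-aa) / (aa * Beta aa bb))"
proof -
  have "\<delta> + - bb = aa" "\<delta> + - aa = bb" using aa_plus_bb by auto
  then have "s0 powr \<delta> * s0 powr (-bb) = s0 powr aa" "(1-s0) powr \<delta> * (1-s0) powr (-aa) = (1-s0) powr bb"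
    by (simp_all only: powr_add[symmetric])
  moreover have "c / bb = (1-c) / aa"
    using c_pos c_less_1 \<delta>_pos by (simp add: aa_def bb_def field_simps)
  ultimately have "(c / bb) * ((s0 powr \<delta> * s0 powr (-bb)) * (1-s0) powr bb) / Beta aa bb =
      ((1-c) / aa) * (s0 powr aa * ((1-s0) powr \<delta> * (1-s0) powr (-aa))) / Beta aa bb"
    by simp
  then show ?thesis by (simp add: field_simps)
qed

lemma integral_cut_kernel:
  assumes s0: "0 \<le> s0" "s0 < 1"
  shows "integral\<^sup>L \<beta> (cut_kernel s0) = measure \<beta> {..s0}"
proof (cases "s0 = 0")
  case True
  have "AE w in \<beta>. cut_kernel s0 w = 0" and "AE w in \<beta>. w \<notin> {..s0}"
    using AE_beta True \<delta>_pos by (auto simp: cut_kernel_def)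
  then show ?thesis
    by (simp add: integral_cong_AE[where g="\<lambda>_. 0"] measure_eq_AE[where B="{}"])
next
  case False
  then have s0': "0 < s0" "s0 < 1" using s0 by auto
  let ?up = "\<lambda>w. indicator {s0<..} w * w powr (-\<delta>)"
  let ?low = "\<lambda>w. indicator {..<s0} w * (1-w) powr (-\<delta>)"
  have int_ind: "integrable \<beta> (indicator A :: real \<Rightarrow> real)" if "A \<in> sets borel" for A
    using that by (intro integrable_beta_bounded[where K=1]) auto
  have int_up: "integrable \<beta> ?up"
    by (rule integrable_beta_bounded[where K="s0 powr (-\<delta>)"])
       (use s0' \<delta>_pos in \<open>auto simp: indicator_def intro!: powr_mono2'\<close>)
  have int_low: "integrable \<beta> ?low"
    by (rule integrable_beta_bounded[where K="(1-s0) powr (-\<delta>)"])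
       (use s0' \<delta>_pos in \<open>auto simp: indicator_def intro!: powr_mono2'\<close>)
  have "integral\<^sup>L \<beta> (cut_kernel s0) = integral\<^sup>L \<beta> (\<lambda>w.
      c * indicator {..s0} w + (c * s0 powr \<delta>) * ?up w +
      (1-c) * indicator {..<s0} w - ((1-c) * (1-s0) powr \<delta>) * ?low w)"
    by (rule integral_cong_AE) (use AE_beta in \<open>auto simp: cut_kernel_split[OF s0']\<close>)
  also have "\<dots> = c * measure \<beta> {..s0} + (c * s0 powr \<delta>) * integral\<^sup>L \<beta> ?up +
      (1-c) * measure \<beta> {..<s0} - ((1-c) * (1-s0) powr \<delta>) * integral\<^sup>L \<beta> ?low"
    using int_ind int_up int_low by simp
  also have "\<dots> = measure \<beta> {..s0}"
    using integral_beta_upper[OF s0'] integral_beta_lower[OF s0'] tail_balance[OF s0']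
    by (simp add: aa_plus_bb add.commute beta_lessThan_atMost algebra_simps)
  finally show ?thesis .
qed

end

section \<open>The random recursion\<close>

locale recursion = prob_space M + params c \<delta> for M :: "'a measure" and c \<delta> :: real +
  fixes X :: "nat \<Rightarrow> 'a \<Rightarrow> real"
  assumes X_measurable: "\<And>n. n \<ge> 1 \<Longrightarrow> X n \<in> borel_measurable M"
    and X_indep: "indep_vars (\<lambda>_. borel) X {1..}"
    and X_cdf: "\<And>n t. n \<ge> 1 \<Longrightarrow> measure M {\<omega> \<in> space M. X n \<omega> \<le> t} = Fdist c \<delta> t"
begin

definition Y :: "nat \<Rightarrow> 'a \<Rightarrow> real \<times> real" where "Y n \<omega> = Zr (\<lambda>k. X k \<omega>) n"

lemma Y_0: "Y 0 \<omega> = (0, 1)" and Y_Suc: "Y (Suc n) \<omega> = step (Y n \<omega>) (X (Suc n) \<omega>)"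
  by (simp_all add: Y_def)

lemma X_Suc_measurable[measurable]: "X (Suc n) \<in> borel_measurable M"
  using X_measurable[of "Suc n"] by simp

lemma Y_measurable[measurable]: "Y n \<in> borel_measurable M"
proof (induction n)
  case (Suc n)
  then have "(\<lambda>\<omega>. step (Y n \<omega>) (X (Suc n) \<omega>)) \<in> borel_measurable M" by measurable
  then show ?case by (simp add: Y_Suc[abs_def])
qed (simp add: Y_0)

lemma Zr_measurable_PiM: "m \<le> n \<Longrightarrow> (\<lambda>f. Zr f m) \<in> PiM {1..n} (\<lambda>_. borel) \<rightarrow>\<^sub>M borel"
proof (induction m)
  case (Suc m)
  have "(\<lambda>f. f (Suc m)) \<in> PiM {1..n} (\<lambda>_. borel) \<rightarrow>\<^sub>M (borel :: real measure)"
    using Suc.prems by (intro measurable_component_singleton) auto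
  then have "(\<lambda>f. step (Zr f m) (f (Suc m))) \<in> PiM {1..n} (\<lambda>_. borel) \<rightarrow>\<^sub>M borel"
    using Suc by (intro measurable_step) auto
  then show ?case by simp
qed simp

text \<open>The state after \<open>n\<close> steps depends only on \<open>X_1, \<dots>, X_n\<close>, hence is independent of the
  next sample (paired with a dummy coordinate to get a variable in the same space).\<close>
lemma indep_Y_X: "indep_var borel (Y n) borel (\<lambda>\<omega>. (X (Suc n) \<omega>, 0::real))"
proof -
  have "indep_var (PiM {1..n} (\<lambda>_. borel)) (\<lambda>\<omega>. restrict (\<lambda>i. X i \<omega>) {1..n})
      (PiM {Suc n} (\<lambda>_. borel)) (\<lambda>\<omega>. restrict (\<lambda>i. X i \<omega>) {Suc n})"
    by (rule indep_var_restrict[OF X_indep]) auto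
  moreover have "(\<lambda>f. (f (Suc n), 0::real)) \<in> PiM {Suc n} (\<lambda>_. borel) \<rightarrow>\<^sub>M (borel :: (real \<times> real) measure)"
  proof -
    have [measurable]: "(\<lambda>f. f (Suc n)) \<in> PiM {Suc n} (\<lambda>_. borel) \<rightarrow>\<^sub>M (borel :: real measure)"
      by (rule measurable_component_singleton) simp
    have "(\<lambda>f. (f (Suc n), 0::real)) \<in> PiM {Suc n} (\<lambda>_. borel) \<rightarrow>\<^sub>M (borel \<Otimes>\<^sub>M borel)"
      by measurable
    then show ?thesis by (simp add: borel_prod)
  qed
  ultimately have "indep_var borel ((\<lambda>f. Zr f n) \<circ> (\<lambda>\<omega>. restrict (\<lambda>i. X i \<omega>) {1..n}))
     borel ((\<lambda>f. (f (Suc n), 0::real)) \<circ> (\<lambda>\<omega>. restrict (\<lambda>i. X i \<omega>) {Suc n}))"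
    using indep_var_compose[OF _ Zr_measurable_PiM[OF order_refl]] by blast
  moreover have "(\<lambda>f. Zr f n) \<circ> (\<lambda>\<omega>. restrict (\<lambda>i. X i \<omega>) {1..n}) = Y n"
    by (auto simp: fun_eq_iff Y_def intro!: Zr_cong)
  ultimately show ?thesis by (simp add: comp_def)
qed

definition PX :: "real measure" where "PX = distr M borel (X 1)"

lemma real_distribution_X: "n \<ge> 1 \<Longrightarrow> real_distribution (distr M borel (X n))"
  using X_measurable by (auto simp: real_distribution_def real_distribution_axioms_def intro!: prob_space_distr)

lemma cdf_X: "n \<ge> 1 \<Longrightarrow> cdf (distr M borel (X n)) t = F t"
  using X_measurable X_cdf by (simp add: cdf_def measure_distr vimage_def Int_def conj_commute)

lemma distr_X: "n \<ge> 1 \<Longrightarrow> distr M borel (X n) = PX"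
  unfolding PX_def by (rule cdf_unique[OF real_distribution_X real_distribution_X]) (auto simp: cdf_X)

lemma cdf_PX: "cdf PX t = F t"
  unfolding PX_def by (rule cdf_X) simp

lemma sets_PX[measurable_cong, simp]: "sets PX = sets borel" by (simp add: PX_def)

sublocale PX: real_distribution PX
  unfolding PX_def by (rule real_distribution_X) simp

lemma nn_integral_Y_X:
  assumes f[measurable]: "case_prod f \<in> borel_measurable (borel \<Otimes>\<^sub>M borel)"
  shows "(\<integral>\<^sup>+\<omega>. f (Y n \<omega>) (X (Suc n) \<omega>) \<partial>M) = (\<integral>\<^sup>+\<omega>. (\<integral>\<^sup>+x. f (Y n \<omega>) x \<partial>PX) \<partial>M)"
proof -
  let ?PY = "distr M borel (Y n)"
  let ?Q = "distr M borel (\<lambda>\<omega>. (X (Suc n) \<omega>, 0::real))"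
  have [measurable]: "(\<lambda>\<omega>. (X (Suc n) \<omega>, 0::real)) \<in> borel_measurable M"
    unfolding borel_prod[symmetric] by measurable
  have Q: "?Q = distr PX borel (\<lambda>x. (x, 0::real))"
    unfolding distr_X[of "Suc n", simplified, symmetric]
    by (subst distr_distr) (auto simp: comp_def borel_prod[symmetric])
  have joint: "?PY \<Otimes>\<^sub>M ?Q = distr M (borel \<Otimes>\<^sub>M borel) (\<lambda>\<omega>. (Y n \<omega>, (X (Suc n) \<omega>, 0)))"
    using indep_Y_X[of n] unfolding indep_var_distribution_eq by simp
  interpret PY: prob_space ?PY by (rule prob_space_distr) simp
  interpret Qp: prob_space ?Q by (rule prob_space_distr) simp
  interpret pair_sigma_finite ?PY ?Q ..
  let ?g = "\<lambda>(y::real\<times>real, q::real\<times>real). f y (fst q)"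
  have g[measurable]: "?g \<in> borel_measurable (borel \<Otimes>\<^sub>M borel)"
  proof -
    have "(\<lambda>p::(real\<times>real)\<times>(real\<times>real). (fst p, fst (snd p))) \<in> (borel \<Otimes>\<^sub>M borel) \<rightarrow>\<^sub>M (borel \<Otimes>\<^sub>M borel)"
      unfolding borel_prod[symmetric] by measurable
    from measurable_compose[OF this f] show ?thesis by (simp add: case_prod_beta)
  qed
  have [measurable]: "?g \<in> borel_measurable borel" using g by (simp add: borel_prod)
  have "(\<integral>\<^sup>+\<omega>. f (Y n \<omega>) (X (Suc n) \<omega>) \<partial>M) =
      (\<integral>\<^sup>+p. ?g p \<partial>distr M (borel \<Otimes>\<^sub>M borel) (\<lambda>\<omega>. (Y n \<omega>, (X (Suc n) \<omega>, 0))))"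
    by (subst nn_integral_distr) (auto simp: borel_prod)
  also have "\<dots> = (\<integral>\<^sup>+y. \<integral>\<^sup>+q. f y (fst q) \<partial>?Q \<partial>?PY)"
  proof -
    have "?g \<in> borel_measurable (?PY \<Otimes>\<^sub>M ?Q)"
      using g by (subst measurable_cong_sets[OF sets_pair_measure_cong[OF sets_distr sets_distr] refl]) simp
    from Qp.nn_integral_fst[OF this] show ?thesis by (simp add: joint)
  qed
  also have "\<dots> = (\<integral>\<^sup>+y. \<integral>\<^sup>+x. f y x \<partial>PX \<partial>?PY)"
    unfolding Q by (intro nn_integral_cong, subst nn_integral_distr) auto
  also have "\<dots> = (\<integral>\<^sup>+\<omega>. (\<integral>\<^sup>+x. f (Y n \<omega>) x \<partial>PX) \<partial>M)"
  proof -
    have "(\<lambda>y. \<integral>\<^sup>+ x. f y x \<partial>PX) \<in> borel_measurable borel"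
      by (rule PX.borel_measurable_nn_integral) simp
    then show ?thesis by (subst nn_integral_distr) auto
  qed
  finally show ?thesis .
qed

text \<open>Since \<open>F\<close> is continuous, \<open>PX\<close> has no atoms and all intervals have probability
  \<open>F b - F a\<close> regardless of their end points.\<close>
lemma PX_singleton: "measure PX {q} = 0"
  using continuous_F PX.isCont_cdf[of q]
  by (simp add: cdf_PX[abs_def] continuous_on_eq_continuous_at)

lemma PX_insert: "A \<in> sets borel \<Longrightarrow> q \<notin> A \<Longrightarrow> measure PX (insert q A) = measure PX A"
  using PX.finite_measure_Union[of A "{q}"] by (simp add: PX_singleton)

lemma PX_Ioc: "a \<le> b \<Longrightarrow> measure PX {x. a < x \<and> x \<le> b} = F b - F a"
proof (cases "a = b")
  case False
  moreover assume "a \<le> b"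
  ultimately show ?thesis
    using PX.cdf_diff_eq[of a b] by (simp add: cdf_PX greaterThanAtMost_def greaterThan_def atMost_def Int_def)
next
  case True
  then have "{x. a < x \<and> x \<le> b} = {}" by auto
  then show ?thesis using True by (metis measure_empty diff_self)
qed

lemma PX_Icc: "a \<le> b \<Longrightarrow> measure PX {x. a \<le> x \<and> x \<le> b} = F b - F a"
proof -
  assume ab: "a \<le> b"
  then have "{x. a \<le> x \<and> x \<le> b} = insert a {x. a < x \<and> x \<le> b}" by auto
  then show ?thesis using PX_insert[of "{x. a < x \<and> x \<le> b}" a] PX_Ioc[OF ab] by simp
qed

lemma PX_Ico: "a \<le> b \<Longrightarrow> measure PX {x. a \<le> x \<and> x < b} = F b - F a"
proof (cases "a = b")
  case False
  moreover assume ab: "a \<le> b"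
  ultimately have "{x. a \<le> x \<and> x \<le> b} = insert b {x. a \<le> x \<and> x < b}" by auto
  then show ?thesis using PX_insert[of "{x. a \<le> x \<and> x < b}" b] PX_Icc[OF ab] by simp
next
  case True
  then have "{x. a \<le> x \<and> x < b} = {}" by auto
  then show ?thesis using True by (metis measure_empty diff_self)
qed

lemma AE_PX: "AE x in PX. 0 \<le> x \<and> x \<le> 1"
proof -
  have "measure PX {x. 0 \<le> x \<and> x \<le> 1} = 1"
    using PX_Icc[of 0 1] by (simp add: Fdist_def)
  then have "AE x in PX. x \<in> {x. 0 \<le> x \<and> x \<le> 1}"
    by (intro PX.AE_prob_1) simp
  then show ?thesis by simp
qed

lemma AE_X_unit: "AE \<omega> in M. \<forall>n. 0 \<le> X (Suc n) \<omega> \<and> X (Suc n) \<omega> \<le> 1"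
proof (subst AE_all_countable, intro allI)
  fix n
  have PX_eq: "distr M borel (X (Suc n)) = PX" by (rule distr_X) simp
  have "AE x in distr M borel (X (Suc n)). 0 \<le> x \<and> x \<le> 1"
    unfolding PX_eq by (rule AE_PX)
  then show "AE \<omega> in M. 0 \<le> X (Suc n) \<omega> \<and> X (Suc n) \<omega> \<le> 1"
    by (rule AE_distrD[OF X_Suc_measurable])
qed

lemma PX_low_piece:
  assumes v: "0 \<le> v" "v \<le> 1/2" and m: "0 \<le> m" "m \<le> 1"
  shows "measure PX {x. 0 \<le> x \<and> x < v \<and> x \<le> v * m} = c * (2 * v) powr \<delta> * m powr \<delta>"
proof -
  have "v * m \<le> v" using v m by (simp add: mult_left_le)
  then have "measure PX {x. 0 \<le> x \<and> x < v \<and> x \<le> v * m} = F (v * m)"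
  proof (cases "v * m < v")
    case True
    then have "{x. 0 \<le> x \<and> x < v \<and> x \<le> v * m} = {x. 0 \<le> x \<and> x \<le> v * m}" by auto
    then show ?thesis using PX_Icc[of 0 "v * m"] v m by (simp add: Fdist_def)
  next
    case False
    then have "{x. 0 \<le> x \<and> x < v \<and> x \<le> v * m} = {x. 0 \<le> x \<and> x < v * m}"
      using \<open>v * m \<le> v\<close> by auto
    then show ?thesis using PX_Ico[of 0 "v * m"] v m by (simp add: Fdist_def)
  qed
  also have "\<dots> = c * (2 * v) powr \<delta> * m powr \<delta>"
    using F_low[of "v * m"] \<open>v * m \<le> v\<close> v m by (simp add: powr_mult mult.assoc)
  finally show ?thesis .
qed

lemma PX_middle_piece:
  assumes v: "0 \<le> v" "v \<le> 1/2"
  shows "measure PX {x. v \<le> x \<and> x \<le> 1 - v} = 1 - (2 * v) powr \<delta>"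
  using PX_Icc[of v "1 - v"] F_low[OF v] F_high[OF v] v by (simp add: algebra_simps)

lemma PX_high_piece:
  assumes v: "0 \<le> v" "v \<le> 1/2" and m: "0 \<le> m"
  shows "measure PX {x. 1 - v < x \<and> x \<le> 1 - v * m} =
    (if m < 1 then (1 - c) * (2 * v) powr \<delta> * (1 - m powr \<delta>) else 0)"
proof (cases "m < 1")
  case True
  then have "v * m \<le> v" using v m by (simp add: mult_left_le)
  then have "measure PX {x. 1 - v < x \<and> x \<le> 1 - v * m} = F (1 - v * m) - F (1 - v)"
    by (intro PX_Ioc) simp
  also have "\<dots> = (1 - c) * (2 * v) powr \<delta> * (1 - m powr \<delta>)"
    using F_high[of "v * m"] F_high[OF v] \<open>v * m \<le> v\<close> v m
    by (simp add: powr_mult algebra_simps)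
  finally show ?thesis using True by simp
next
  case False
  then have "v * 1 \<le> v * m" using v by (intro mult_left_mono) auto
  then have "{x. 1 - v < x \<and> x \<le> 1 - v * m} = {}" by auto
  then show ?thesis using False by (metis measure_empty)
qed

lemma PX_level_set_split:
  assumes s: "admissible s" "0 < jwidth s" and w: "0 < w" "w < 1"
  defines "v \<equiv> jwidth s / (2 * snd s)"
  shows "measure PX {x. jleft (step s x) + jwidth (step s x) * w \<le> jleft s + jwidth s * s0} =
    measure PX {x. 0 \<le> x \<and> x < v \<and> x \<le> v * min 1 (s0 / w)} +
    measure PX (if w \<le> s0 then {x. v \<le> x \<and> x \<le> 1 - v} else {}) +
    measure PX {x. 1 - v < x \<and> x \<le> 1 - v * ((1 - s0) / (1 - w))}"
    (is "measure PX ?S = measure PX ?A1 + measure PX ?A2 + measure PX ?A3")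
proof -
  have v: "0 \<le> v" "v \<le> 1/2"
    using s by (auto simp: v_def jwidth_def admissible_def field_simps)
  have A1_eq: "?A1 = {x. 0 \<le> x \<and> x < v \<and> x \<le> v * (s0 / w)}"
  proof (cases "s0 / w \<le> 1")
    case False
    then have "v * 1 \<le> v * (s0 / w)" using v by (intro mult_left_mono) auto
    then show ?thesis by (auto simp: min_def)
  qed (auto simp: min_def)
  have mem: "x \<in> ?S \<longleftrightarrow> x \<in> ?A1 \<union> ?A2 \<union> ?A3" if "0 \<le> x" "x \<le> 1" for x
    using step_point_le_iff[OF s w that, of s0] that(1) unfolding v_def[symmetric] A1_eq
    by simp
  have "AE x in PX. x \<in> ?S \<longleftrightarrow> x \<in> ?A1 \<union> ?A2 \<union> ?A3"
    using AE_PX by eventually_elim (rule mem; simp)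
  then have "measure PX ?S = measure PX (?A1 \<union> ?A2 \<union> ?A3)"
    by (intro measure_eq_AE) simp_all
  also have "\<dots> = measure PX ?A1 + measure PX ?A2 + measure PX ?A3"
  proof -
    have add: "measure PX (A \<union> B \<union> C) = measure PX A + measure PX B + measure PX C"
      if "A \<inter> B = {}" "(A \<union> B) \<inter> C = {}" "A \<in> sets PX" "B \<in> sets PX" "C \<in> sets PX"
      for A B C
      using that PX.finite_measure_Union[of "A \<union> B" C] PX.finite_measure_Union[of A B] by simp
    have "?A1 \<in> sets PX" "?A2 \<in> sets PX" "?A3 \<in> sets PX" by simp_all
    moreover have "?A1 \<inter> ?A2 = {}" "(?A1 \<union> ?A2) \<inter> ?A3 = {}"
      using v by auto
    ultimately show ?thesis by (intro add)
  qed
  finally show ?thesis .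
qed

text \<open>Samples
  that leave the state unchanged contribute \<open>(1 - \<kappa>) 1[w \<le> s0]\<close>, cutting samples
  contribute \<open>\<kappa> cut_kernel s0 w\<close>.\<close>
lemma step_kernel:
  assumes s: "admissible s" "0 < jwidth s" and s0: "0 \<le> s0" "s0 < 1" and w: "0 < w" "w < 1"
  defines "\<kappa> \<equiv> (2 * (jwidth s / (2 * snd s))) powr \<delta>"
  shows "measure PX {x. jleft (step s x) + jwidth (step s x) * w \<le> jleft s + jwidth s * s0} =
    \<kappa> * cut_kernel s0 w + (1 - \<kappa>) * indicator {..s0} w"
proof -
  define v where "v = jwidth s / (2 * snd s)"
  have v: "0 \<le> v" "v \<le> 1/2"
    using s by (auto simp: v_def jwidth_def admissible_def field_simps)
  have \<kappa>: "\<kappa> = (2 * v) powr \<delta>" by (simp add: \<kappa>_def v_def)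
  have "measure PX {x. 0 \<le> x \<and> x < v \<and> x \<le> v * min 1 (s0 / w)} = c * \<kappa> * min 1 (s0 / w) powr \<delta>"
    unfolding \<kappa> using s0 w by (intro PX_low_piece[OF v]) auto
  moreover have "measure PX (if w \<le> s0 then {x. v \<le> x \<and> x \<le> 1 - v} else {}) =
      (1 - \<kappa>) * indicator {..s0} w"
    using PX_middle_piece[OF v] by (simp add: \<kappa>)
  moreover have "measure PX {x. 1 - v < x \<and> x \<le> 1 - v * ((1 - s0) / (1 - w))} =
      indicator {..<s0} w * (1 - c) * \<kappa> * (1 - ((1 - s0) / (1 - w)) powr \<delta>)"
    using PX_high_piece[OF v, of "(1 - s0) / (1 - w)"] s0 w by (simp add: \<kappa>)
  ultimately show ?thesis
    unfolding PX_level_set_split[OF s w] v_def[symmetric] by (simp add: cut_kernel_def algebra_simps)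
qed

end

section \<open>The invariant: beta points of \<open>J_n\<close>\<close>

context recursion
begin

definition Phi :: "real \<Rightarrow> real \<times> real \<Rightarrow> ennreal" where
  "Phi t s = emeasure \<beta> {w. jleft s + jwidth s * w \<le> t}"

lemma Phi_le_1: "Phi t s \<le> 1"
  unfolding Phi_def by (rule beta.emeasure_le_1)

lemma Phi_initial: "Phi t (0, 1) = emeasure \<beta> {..t}"
  by (simp add: Phi_def jleft_def jwidth_def atMost_def)

lemma Phi_below: assumes "admissible s" "t < jleft s" shows "Phi t s = 0"
proof -
  have "AE w in \<beta>. \<not> jleft s + jwidth s * w \<le> t"
    using AE_beta
  proof eventually_elim
    case (elim w)
    then have "0 \<le> jwidth s * w" using assms(1) by (simp add: admissible_iff_jwidth)
    then show ?case using assms(2) by simp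
  qed
  from emeasure_eq_0_AE[OF this] show ?thesis by (simp add: Phi_def)
qed

lemma Phi_above: assumes "admissible s" "jleft s + jwidth s \<le> t" shows "Phi t s = 1"
proof -
  have "AE w in \<beta>. jleft s + jwidth s * w \<le> t"
    using AE_beta
  proof eventually_elim
    case (elim w)
    then have "jwidth s * w \<le> jwidth s"
      using assms(1) by (intro mult_left_le) (auto simp: admissible_iff_jwidth)
    then show ?case using assms(2) by simp
  qed
  then have "emeasure \<beta> {w. jleft s + jwidth s * w \<le> t} = emeasure \<beta> (space \<beta>)"
    by (intro emeasure_eq_AE) auto
  then show ?thesis using beta.emeasure_space_1 by (simp add: Phi_def)
qed

lemma measurable_Phi[measurable]:
  assumes [measurable]: "f \<in> borel_measurable N"
  shows "(\<lambda>x. Phi t (f x)) \<in> borel_measurable N"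
proof -
  let ?I = "\<lambda>p. indicator {p. jleft (f (fst p)) + jwidth (f (fst p)) * snd p \<le> t} p :: ennreal"
  have "?I \<in> borel_measurable (N \<Otimes>\<^sub>M \<beta>)"
    by (subst measurable_cong_sets[OF sets_pair_measure_cong[OF refl sets_beta_law] refl]) measurable
  then have "(\<lambda>x. \<integral>\<^sup>+w. ?I (x, w) \<partial>\<beta>) \<in> borel_measurable N"
    by (rule beta.borel_measurable_nn_integral_fst)
  moreover have "(\<integral>\<^sup>+w. ?I (x, w) \<partial>\<beta>) = Phi t (f x)" for x
  proof -
    have "(\<integral>\<^sup>+w. ?I (x, w) \<partial>\<beta>) = (\<integral>\<^sup>+w. indicator {w. jleft (f x) + jwidth (f x) * w \<le> t} w \<partial>\<beta>)"
      by (intro nn_integral_cong) (auto simp: indicator_def)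
    then show ?thesis unfolding Phi_def by (simp add: nn_integral_indicator)
  qed
  ultimately show ?thesis by simp
qed

lemma nn_integral_Phi_step:
  "(\<integral>\<^sup>+x. Phi t (step s x) \<partial>PX) =
    (\<integral>\<^sup>+w. measure PX {x. jleft (step s x) + jwidth (step s x) * w \<le> t} \<partial>\<beta>)"
proof -
  interpret pair_sigma_finite PX \<beta> ..
  let ?I = "\<lambda>p. indicator {p. jleft (step s (fst p)) + jwidth (step s (fst p)) * snd p \<le> t} p :: ennreal"
  have "?I \<in> borel_measurable (PX \<Otimes>\<^sub>M \<beta>)"
    by (subst measurable_cong_sets[OF sets_pair_measure_cong[OF sets_PX sets_beta_law] refl]) measurable
  then have "(\<integral>\<^sup>+x. \<integral>\<^sup>+w. ?I (x, w) \<partial>\<beta> \<partial>PX) = (\<integral>\<^sup>+w. \<integral>\<^sup>+x. ?I (x, w) \<partial>PX \<partial>\<beta>)"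
    by (rule Fubini[symmetric])
  moreover have "(\<integral>\<^sup>+w. ?I (x, w) \<partial>\<beta>) = Phi t (step s x)" for x
  proof -
    have "(\<integral>\<^sup>+w. ?I (x, w) \<partial>\<beta>) = (\<integral>\<^sup>+w. indicator {w. jleft (step s x) + jwidth (step s x) * w \<le> t} w \<partial>\<beta>)"
      by (intro nn_integral_cong) (auto simp: indicator_def)
    then show ?thesis unfolding Phi_def by (simp add: nn_integral_indicator)
  qed
  moreover have "(\<integral>\<^sup>+x. ?I (x, w) \<partial>PX) = measure PX {x. jleft (step s x) + jwidth (step s x) * w \<le> t}" for w
  proof -
    have "(\<integral>\<^sup>+x. ?I (x, w) \<partial>PX) = (\<integral>\<^sup>+x. indicator {x. jleft (step s x) + jwidth (step s x) * w \<le> t} x \<partial>PX)"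
      by (intro nn_integral_cong) (auto simp: indicator_def)
    then show ?thesis by (simp add: nn_integral_indicator PX.emeasure_eq_measure)
  qed
  ultimately show ?thesis by simp
qed

lemma Phi_step_average_interior:
  assumes s: "admissible s" "0 < jwidth s" and t: "jleft s \<le> t" "t < jleft s + jwidth s"
  shows "(\<integral>\<^sup>+x. Phi t (step s x) \<partial>PX) = Phi t s"
proof -
  define s0 where "s0 = (t - jleft s) / jwidth s"
  define \<kappa> where "\<kappa> = (2 * (jwidth s / (2 * snd s))) powr \<delta>"
  have s0: "0 \<le> s0" "s0 < 1" and t_eq: "t = jleft s + jwidth s * s0"
    using s t by (auto simp: s0_def field_simps)
  define h where "h w = \<kappa> * cut_kernel s0 w + (1 - \<kappa>) * indicator {..s0} w" for w
  have kernel: "measure PX {x. jleft (step s x) + jwidth (step s x) * w \<le> t} = h w"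
    if "0 < w" "w < 1" for w
    unfolding h_def \<kappa>_def t_eq using that by (intro step_kernel s s0)
  have int_kernel: "integrable \<beta> (cut_kernel s0)"
    by (rule integrable_beta_bounded[where K=1]) (use cut_kernel_bounded s0 in auto)
  have int_indicator: "integrable \<beta> (indicator {..s0} :: real \<Rightarrow> real)"
    by (rule integrable_beta_bounded[where K=1]) auto
  have int_h: "integrable \<beta> h"
  proof (rule integrable_beta_bounded[where K=1])
    show "\<bar>h w\<bar> \<le> 1" if "0 < w" "w < 1" for w
      using kernel[OF that] PX.prob_le_1 by (metis abs_of_nonneg measure_nonneg)
  qed (unfold h_def, measurable)
  have "(\<integral>\<^sup>+x. Phi t (step s x) \<partial>PX) = (\<integral>\<^sup>+w. ennreal (h w) \<partial>\<beta>)"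
    unfolding nn_integral_Phi_step using AE_beta
    by (intro nn_integral_cong_AE) (auto simp: kernel)
  also have "\<dots> = ennreal (integral\<^sup>L \<beta> h)"
    using AE_beta by (intro nn_integral_eq_integral int_h) (auto simp: kernel[symmetric])
  also have "integral\<^sup>L \<beta> h = \<kappa> * integral\<^sup>L \<beta> (cut_kernel s0) + (1 - \<kappa>) * measure \<beta> {..s0}"
    unfolding h_def using int_kernel int_indicator by simp
  also have "\<dots> = measure \<beta> {..s0}"
    by (simp add: integral_cut_kernel[OF s0] algebra_simps)
  also have "{..s0} = {w. jleft s + jwidth s * w \<le> t}"
    using s by (auto simp: t_eq)
  finally show ?thesis by (simp add: Phi_def beta.emeasure_eq_measure)
qed

lemma Phi_step_average:
  assumes s: "admissible s"
  shows "(\<integral>\<^sup>+x. Phi t (step s x) \<partial>PX) = Phi t s"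
proof -
  have AE_const: "(\<integral>\<^sup>+x. Phi t (step s x) \<partial>PX) = e" if "AE x in PX. Phi t (step s x) = e" for e
    using that PX.emeasure_space_1 by (simp add: nn_integral_cong_AE)
  consider "jwidth s = 0" | "0 < jwidth s" "t < jleft s" | "0 < jwidth s" "jleft s + jwidth s \<le> t"
    | "0 < jwidth s" "jleft s \<le> t" "t < jleft s + jwidth s"
    using s by (force simp: admissible_iff_jwidth)
  then show ?thesis
  proof cases
    case 1
    then have "snd s = 1/2" by (simp add: jwidth_def)
    show ?thesis
    proof (rule AE_const)
      show "AE x in PX. Phi t (step s x) = Phi t s"
        using AE_PX by eventually_elim (simp add: step_keep \<open>snd s = 1/2\<close> 1)
    qed
  next
    case 2
    show ?thesis unfolding Phi_below[OF s 2(2)]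
    proof (rule AE_const)
      show "AE x in PX. Phi t (step s x) = 0"
        using AE_PX
      proof eventually_elim
        case (elim x)
        then show ?case
          using step_shrinks(1,2)[OF s, of x] 2 by (intro Phi_below) auto
      qed
    qed
  next
    case 3
    show ?thesis unfolding Phi_above[OF s 3(2)]
    proof (rule AE_const)
      show "AE x in PX. Phi t (step s x) = 1"
        using AE_PX
      proof eventually_elim
        case (elim x)
        then show ?case
          using step_shrinks(1,3)[OF s, of x] 3 by (intro Phi_above) auto
      qed
    qed
  next
    case 4
    then show ?thesis by (rule Phi_step_average_interior[OF s])
  qed
qed

definition unit_samples :: "'a \<Rightarrow> bool" where
  "unit_samples \<omega> \<longleftrightarrow> (\<forall>n. 0 \<le> X (Suc n) \<omega> \<and> X (Suc n) \<omega> \<le> 1)"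

lemma AE_unit_samples: "AE \<omega> in M. unit_samples \<omega>"
  unfolding unit_samples_def by (rule AE_X_unit)

lemma Y_nested:
  assumes "unit_samples \<omega>"
  shows "admissible (Y n \<omega>)" "incseq (\<lambda>n. jleft (Y n \<omega>))" "decseq (\<lambda>n. jwidth (Y n \<omega>))"
    "decseq (\<lambda>n. jleft (Y n \<omega>) + jwidth (Y n \<omega>))"
proof -
  have "0 \<le> X k \<omega> \<and> X k \<omega> \<le> 1" if "1 \<le> k" for k
    using assms that unfolding unit_samples_def by (metis Suc_pred' less_le_trans zero_less_one)
  then show "admissible (Y n \<omega>)" "incseq (\<lambda>n. jleft (Y n \<omega>))" "decseq (\<lambda>n. jwidth (Y n \<omega>))"
    "decseq (\<lambda>n. jleft (Y n \<omega>) + jwidth (Y n \<omega>))"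
    unfolding Y_def by (intro Zr_nested; simp)+
qed

lemma Y_Suc_unit: "unit_samples \<omega> \<Longrightarrow> 0 \<le> X (Suc n) \<omega> \<and> X (Suc n) \<omega> \<le> 1"
  by (simp add: unit_samples_def)

lemma nn_integral_Phi_Y: "(\<integral>\<^sup>+\<omega>. Phi t (Y n \<omega>) \<partial>M) = emeasure \<beta> {..t}"
proof (induction n)
  case 0
  then show ?case by (simp add: Y_0 Phi_initial emeasure_space_1)
next
  case (Suc n)
  have "(\<lambda>(y, x). Phi t (step y x)) \<in> borel_measurable (borel \<Otimes>\<^sub>M borel)"
    using measurable_Phi[OF measurable_step[OF measurable_fst measurable_snd]]
    by (simp add: case_prod_beta borel_prod)
  then have "(\<integral>\<^sup>+\<omega>. Phi t (Y (Suc n) \<omega>) \<partial>M) = (\<integral>\<^sup>+\<omega>. (\<integral>\<^sup>+x. Phi t (step (Y n \<omega>) x) \<partial>PX) \<partial>M)"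
    using nn_integral_Y_X[of "\<lambda>y x. Phi t (step y x)" n] by (simp add: Y_Suc)
  also have "\<dots> = (\<integral>\<^sup>+\<omega>. Phi t (Y n \<omega>) \<partial>M)"
  proof (rule nn_integral_cong_AE)
    show "AE \<omega> in M. (\<integral>\<^sup>+x. Phi t (step (Y n \<omega>) x) \<partial>PX) = Phi t (Y n \<omega>)"
      using AE_unit_samples by eventually_elim (intro Phi_step_average Y_nested)
  qed
  finally show ?case using Suc by simp
qed

end

section \<open>The widths tend to zero\<close>

context recursion
begin

definition limit_width :: "'a \<Rightarrow> real" where "limit_width \<omega> = lim (\<lambda>n. jwidth (Y n \<omega>))"

lemma measurable_limit_width[measurable]: "limit_width \<in> borel_measurable M"
  unfolding limit_width_def by measurable

lemma limit_width:
  assumes "unit_samples \<omega>"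
  shows "(\<lambda>n. jwidth (Y n \<omega>)) \<longlonglongrightarrow> limit_width \<omega>" "limit_width \<omega> \<le> jwidth (Y n \<omega>)"
    "0 \<le> limit_width \<omega>"
proof -
  have nonneg: "\<forall>i. 0 \<le> jwidth (Y i \<omega>)"
    using Y_nested(1)[OF assms] by (simp add: admissible_iff_jwidth)
  from decseq_convergent[OF Y_nested(3)[OF assms] this] obtain L where
    L: "(\<lambda>n. jwidth (Y n \<omega>)) \<longlonglongrightarrow> L" "\<forall>i. L \<le> jwidth (Y i \<omega>)" by blast
  moreover have "limit_width \<omega> = L" unfolding limit_width_def using L(1) by (rule limI)
  ultimately show "(\<lambda>n. jwidth (Y n \<omega>)) \<longlonglongrightarrow> limit_width \<omega>" "limit_width \<omega> \<le> jwidth (Y n \<omega>)"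
    "0 \<le> limit_width \<omega>"
    using nonneg by (auto intro: LIMSEQ_le_const)
qed

lemma nn_integral_quarter_gain:
  assumes "admissible s"
  shows "(\<integral>\<^sup>+x. quarter_gain s x \<partial>PX) = ennreal (jwidth s / 2 * F (jwidth s / (4 * snd s)))"
proof -
  let ?q = "jwidth s / (4 * snd s)"
  have w: "0 \<le> jwidth s / 2" using assms by (simp add: admissible_iff_jwidth)
  have "(\<integral>\<^sup>+x. quarter_gain s x \<partial>PX) = (\<integral>\<^sup>+x. ennreal (jwidth s / 2) * indicator {..?q} x \<partial>PX)"
    using w by (intro nn_integral_cong) (auto simp: quarter_gain_def indicator_def)
  also have "\<dots> = ennreal (jwidth s / 2) * emeasure PX {..?q}"
    by (rule nn_integral_cmult_indicator) simp
  also have "\<dots> = ennreal (jwidth s / 2) * ennreal (F ?q)"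
    using cdf_PX[of ?q] by (simp add: PX.emeasure_eq_measure cdf_def)
  also have "\<dots> = ennreal (jwidth s / 2 * F ?q)"
    using w PX.cdf_nonneg[of ?q] unfolding cdf_PX by (intro ennreal_mult[symmetric]) auto
  finally show ?thesis .
qed

lemma expected_width_step:
  "(\<integral>\<^sup>+\<omega>. jwidth (Y (Suc n) \<omega>) \<partial>M) + (\<integral>\<^sup>+\<omega>. c * (limit_width \<omega> / 2) powr (1 + \<delta>) \<partial>M)
    \<le> (\<integral>\<^sup>+\<omega>. jwidth (Y n \<omega>) \<partial>M)"
proof -
  have "(\<integral>\<^sup>+\<omega>. c * (limit_width \<omega> / 2) powr (1 + \<delta>) \<partial>M) \<le>
      (\<integral>\<^sup>+\<omega>. (\<integral>\<^sup>+x. quarter_gain (Y n \<omega>) x \<partial>PX) \<partial>M)"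
  proof (rule nn_integral_mono_AE)
    show "AE \<omega> in M. ennreal (c * (limit_width \<omega> / 2) powr (1 + \<delta>)) \<le>
        (\<integral>\<^sup>+x. quarter_gain (Y n \<omega>) x \<partial>PX)"
      using AE_unit_samples
    proof eventually_elim
      case (elim \<omega>)
      have "c * (limit_width \<omega> / 2) powr (1 + \<delta>) \<le> c * (jwidth (Y n \<omega>) / 2) powr (1 + \<delta>)"
        using limit_width(2)[OF elim, of n] limit_width(3)[OF elim] c_pos \<delta>_pos
        by (intro mult_left_mono powr_mono2) auto
      also have "\<dots> \<le> jwidth (Y n \<omega>) / 2 * F (jwidth (Y n \<omega>) / (4 * snd (Y n \<omega>)))"
        by (rule F_quarter_bound[OF Y_nested(1)[OF elim]])
      finally show ?case
        by (subst nn_integral_quarter_gain[OF Y_nested(1)[OF elim]]) (rule ennreal_leI)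
    qed
  qed
  also have "\<dots> = (\<integral>\<^sup>+\<omega>. quarter_gain (Y n \<omega>) (X (Suc n) \<omega>) \<partial>M)"
    using nn_integral_Y_X[of "\<lambda>s x. ennreal (quarter_gain s x)" n] by (simp add: case_prod_beta)
  finally have "(\<integral>\<^sup>+\<omega>. jwidth (Y (Suc n) \<omega>) \<partial>M) + (\<integral>\<^sup>+\<omega>. c * (limit_width \<omega> / 2) powr (1 + \<delta>) \<partial>M) \<le>
      (\<integral>\<^sup>+\<omega>. jwidth (Y (Suc n) \<omega>) \<partial>M) + (\<integral>\<^sup>+\<omega>. quarter_gain (Y n \<omega>) (X (Suc n) \<omega>) \<partial>M)"
    by (rule add_left_mono)
  also have "\<dots> = (\<integral>\<^sup>+\<omega>. ennreal (jwidth (Y (Suc n) \<omega>)) + quarter_gain (Y n \<omega>) (X (Suc n) \<omega>) \<partial>M)"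
    by (rule nn_integral_add[symmetric]) auto
  also have "\<dots> \<le> (\<integral>\<^sup>+\<omega>. jwidth (Y n \<omega>) \<partial>M)"
  proof (rule nn_integral_mono_AE)
    show "AE \<omega> in M. ennreal (jwidth (Y (Suc n) \<omega>)) + ennreal (quarter_gain (Y n \<omega>) (X (Suc n) \<omega>))
        \<le> ennreal (jwidth (Y n \<omega>))"
      using AE_unit_samples
    proof eventually_elim
      case (elim \<omega>)
      have "jwidth (Y (Suc n) \<omega>) + quarter_gain (Y n \<omega>) (X (Suc n) \<omega>) \<le> jwidth (Y n \<omega>)"
        unfolding Y_Suc using step_width_drop[OF Y_nested(1)[OF elim]] Y_Suc_unit[OF elim] by auto
      moreover have "0 \<le> jwidth (Y (Suc n) \<omega>)" "0 \<le> quarter_gain (Y n \<omega>) (X (Suc n) \<omega>)"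
        using Y_nested(1)[OF elim, of "Suc n"] quarter_gain_nonneg[OF Y_nested(1)[OF elim, of n]]
        by (auto simp: admissible_iff_jwidth)
      ultimately show ?case by (simp add: ennreal_plus[symmetric] del: ennreal_plus)
    qed
  qed
  finally show ?thesis .
qed

text \<open>Telescoping the decrements: \<open>n D \<le> 1\<close> for all \<open>n\<close>, hence \<open>D = 0\<close>.\<close>
lemma AE_limit_width_zero: "AE \<omega> in M. limit_width \<omega> = 0"
proof -
  define E where "E n = (\<integral>\<^sup>+\<omega>. jwidth (Y n \<omega>) \<partial>M)" for n
  define D where "D = (\<integral>\<^sup>+\<omega>. c * (limit_width \<omega> / 2) powr (1 + \<delta>) \<partial>M)"
  have telescope: "E n + of_nat n * D \<le> 1" for n
  proof (induction n)
    case 0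
    then show ?case by (simp add: E_def Y_0 jwidth_def emeasure_space_1)
  next
    case (Suc n)
    have "E (Suc n) + of_nat (Suc n) * D = (E (Suc n) + D) + of_nat n * D"
      by (simp add: algebra_simps)
    also have "\<dots> \<le> E n + of_nat n * D"
      using expected_width_step[of n] unfolding E_def D_def by (rule add_right_mono)
    finally show ?case using Suc by simp
  qed
  have "D = 0"
  proof (rule ccontr)
    assume "D \<noteq> 0"
    have bounded: "of_nat n * D \<le> 1" for n
      using telescope[of n] by (rule order_trans[rotated]) simp
    then obtain d where d: "D = ennreal d" "0 < d"
      using \<open>D \<noteq> 0\<close> bounded[of 1] by (cases D) (auto simp: top_unique)
    obtain n :: nat where "1 / d < of_nat n" using reals_Archimedean2 by blast
    then have "1 < of_nat n * d" using d by (simp add: field_simps)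
    moreover have "of_nat n * d \<le> 1"
      using bounded[of n] d by (simp add: ennreal_of_nat_eq_real_of_nat ennreal_mult[symmetric])
    ultimately show False by simp
  qed
  then have "AE \<omega> in M. ennreal (c * (limit_width \<omega> / 2) powr (1 + \<delta>)) = 0"
    unfolding D_def by (subst (asm) nn_integral_0_iff_AE) auto
  then show ?thesis
    using AE_unit_samples
  proof eventually_elim
    case (elim \<omega>)
    then show ?case using limit_width(3)[OF elim(2)] c_pos by simp
  qed
qed

end

section \<open>The limit and its law\<close>

lemma emeasure_le_by_Fatou:
  fixes f :: "nat \<Rightarrow> 'a \<Rightarrow> ennreal"
  assumes [measurable]: "\<And>n. f n \<in> borel_measurable M" "A \<in> sets M"
    and lim: "AE \<omega> in M. \<omega> \<in> A \<longrightarrow> (\<lambda>n. f n \<omega>) \<longlonglongrightarrow> 1"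
    and int: "\<And>n. (\<integral>\<^sup>+\<omega>. f n \<omega> \<partial>M) = e"
  shows "emeasure M A \<le> e"
proof -
  have "emeasure M A = (\<integral>\<^sup>+\<omega>. indicator A \<omega> \<partial>M)" by simp
  also have "\<dots> \<le> (\<integral>\<^sup>+\<omega>. liminf (\<lambda>n. f n \<omega>) \<partial>M)"
  proof (rule nn_integral_mono_AE)
    show "AE \<omega> in M. indicator A \<omega> \<le> liminf (\<lambda>n. f n \<omega>)"
      using lim
    proof eventually_elim
      case (elim \<omega>)
      show ?case
      proof (cases "\<omega> \<in> A")
        case True
        then have "liminf (\<lambda>n. f n \<omega>) = 1" using elim by (intro lim_imp_Liminf) auto
        then show ?thesis by (simp add: indicator_def)
      qed simp
    qed
  qed
  also have "\<dots> \<le> liminf (\<lambda>n. \<integral>\<^sup>+\<omega>. f n \<omega> \<partial>M)"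
    by (rule nn_integral_liminf) simp
  finally show ?thesis by (simp add: int Liminf_const)
qed

context params
begin

lemma density_f_dens: "density lborel (\<lambda>x. ennreal (f_dens \<delta> c x)) = distr \<beta> lborel (\<lambda>w. w - 1/2)"
proof (rule measure_eqI)
  fix A :: "real set" assume A: "A \<in> sets (density lborel (\<lambda>x. ennreal (f_dens \<delta> c x)))"
  then have [measurable]: "A \<in> sets borel" by simp
  have "emeasure (distr \<beta> lborel (\<lambda>w. w - 1/2)) A =
      (\<integral>\<^sup>+w. ennreal (beta_density aa bb w) * indicator A (w - 1/2) \<partial>lborel)"
    by (simp add: emeasure_distr beta_law_def emeasure_density vimage_def indicator_def)
  also have "\<dots> = (\<integral>\<^sup>+x. ennreal (beta_density aa bb (1/2 + x)) * indicator A x \<partial>lborel)"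
    by (subst nn_integral_real_affine[where c=1 and t="1/2"]) auto
  also have "\<dots> = emeasure (density lborel (\<lambda>x. ennreal (f_dens \<delta> c x))) A"
    by (simp add: emeasure_density f_dens_eq_beta_density add.commute)
  finally show "emeasure (density lborel (\<lambda>x. ennreal (f_dens \<delta> c x))) A =
      emeasure (distr \<beta> lborel (\<lambda>w. w - 1/2)) A" ..
qed simp

end

context recursion
begin

definition W :: "'a \<Rightarrow> real" where "W \<omega> = lim (\<lambda>n. jleft (Y n \<omega>))"

definition collapsing :: "'a \<Rightarrow> bool" where
  "collapsing \<omega> \<longleftrightarrow> unit_samples \<omega> \<and> limit_width \<omega> = 0"

lemma measurable_W[measurable]: "W \<in> borel_measurable M"
  unfolding W_def by measurable

lemma AE_collapsing: "AE \<omega> in M. collapsing \<omega>"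
  using AE_unit_samples AE_limit_width_zero by eventually_elim (simp add: collapsing_def)

lemma collapsing_limits:
  assumes "collapsing \<omega>"
  shows "(\<lambda>n. jleft (Y n \<omega>)) \<longlonglongrightarrow> W \<omega>" "(\<lambda>n. jleft (Y n \<omega>) + jwidth (Y n \<omega>)) \<longlonglongrightarrow> W \<omega>"
    "(\<lambda>n. fst (Y n \<omega>)) \<longlonglongrightarrow> W \<omega> - 1/2"
proof -
  have unit: "unit_samples \<omega>" and width: "(\<lambda>n. jwidth (Y n \<omega>)) \<longlonglongrightarrow> 0"
    using assms limit_width(1)[of \<omega>] by (auto simp: collapsing_def)
  have "jleft (Y i \<omega>) \<le> 1" for i
  proof -
    have "jleft (Y i \<omega>) + jwidth (Y i \<omega>) \<le> jleft (Y 0 \<omega>) + jwidth (Y 0 \<omega>)"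
      using Y_nested(4)[OF unit] by (simp add: decseq_def)
    moreover have "0 \<le> jwidth (Y i \<omega>)" using Y_nested(1)[OF unit] by (simp add: admissible_iff_jwidth)
    ultimately show ?thesis by (simp add: Y_0 jleft_def jwidth_def)
  qed
  then obtain L where "(\<lambda>n. jleft (Y n \<omega>)) \<longlonglongrightarrow> L"
    using incseq_convergent[OF Y_nested(2)[OF unit]] by blast
  then show left: "(\<lambda>n. jleft (Y n \<omega>)) \<longlonglongrightarrow> W \<omega>"
    unfolding W_def by (simp add: limI)
  show "(\<lambda>n. jleft (Y n \<omega>) + jwidth (Y n \<omega>)) \<longlonglongrightarrow> W \<omega>"
    using tendsto_add[OF left width] by simp
  have "(\<lambda>n. jleft (Y n \<omega>) + jwidth (Y n \<omega>) / 2 - 1/2) \<longlonglongrightarrow> W \<omega> + 0 / 2 - 1/2"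
    by (intro tendsto_intros left width) simp
  then show "(\<lambda>n. fst (Y n \<omega>)) \<longlonglongrightarrow> W \<omega> - 1/2" by (simp add: fst_eq_midpoint)
qed

text \<open>If \<open>W < t\<close>, the whole interval \<open>J_n\<close> eventually lies below \<open>t\<close>; if \<open>W > t\<close>, it
  eventually lies above \<open>t\<close>.  With \<open>nn_integral_Phi_Y\<close> and Fatou's lemma this bounds the
  distribution function of \<open>W\<close> from both sides.\<close>
lemma emeasure_W_less: "emeasure M {\<omega> \<in> space M. W \<omega> < t} \<le> emeasure \<beta> {..t}"
proof (rule emeasure_le_by_Fatou[OF _ _ _ nn_integral_Phi_Y])
  show "AE \<omega> in M. \<omega> \<in> {\<omega> \<in> space M. W \<omega> < t} \<longrightarrow> (\<lambda>n. Phi t (Y n \<omega>)) \<longlonglongrightarrow> 1"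
    using AE_collapsing
  proof (eventually_elim, intro impI)
    case (elim \<omega>)
    have adm: "admissible (Y n \<omega>)" for n
      using elim by (intro Y_nested(1)) (simp add: collapsing_def)
    assume "\<omega> \<in> {\<omega> \<in> space M. W \<omega> < t}"
    then have "eventually (\<lambda>n. jleft (Y n \<omega>) + jwidth (Y n \<omega>) < t) sequentially"
      using collapsing_limits(2)[OF elim] by (auto intro: order_tendstoD(2))
    then have "eventually (\<lambda>n. Phi t (Y n \<omega>) = 1) sequentially"
      by eventually_elim (simp add: Phi_above adm)
    then show "(\<lambda>n. Phi t (Y n \<omega>)) \<longlonglongrightarrow> 1" by (rule tendsto_eventually)
  qed
qed simp_all

lemma emeasure_W_greater: "emeasure M {\<omega> \<in> space M. t < W \<omega>} \<le> 1 - emeasure \<beta> {..t}"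
proof (rule emeasure_le_by_Fatou)
  show "(\<integral>\<^sup>+\<omega>. 1 - Phi t (Y n \<omega>) \<partial>M) = 1 - emeasure \<beta> {..t}" for n
    using nn_integral_diff[of "\<lambda>_. 1" M "\<lambda>\<omega>. Phi t (Y n \<omega>)"] Phi_le_1 nn_integral_Phi_Y
    by (simp add: emeasure_space_1 beta.emeasure_eq_measure)
  show "AE \<omega> in M. \<omega> \<in> {\<omega> \<in> space M. t < W \<omega>} \<longrightarrow> (\<lambda>n. 1 - Phi t (Y n \<omega>)) \<longlonglongrightarrow> 1"
    using AE_collapsing
  proof (eventually_elim, intro impI)
    case (elim \<omega>)
    have adm: "admissible (Y n \<omega>)" for n
      using elim by (intro Y_nested(1)) (simp add: collapsing_def)
    assume "\<omega> \<in> {\<omega> \<in> space M. t < W \<omega>}"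
    then have "eventually (\<lambda>n. t < jleft (Y n \<omega>)) sequentially"
      using collapsing_limits(1)[OF elim] by (auto intro: order_tendstoD(1))
    then have "eventually (\<lambda>n. 1 - Phi t (Y n \<omega>) = 1) sequentially"
      by eventually_elim (simp add: Phi_below adm)
    then show "(\<lambda>n. 1 - Phi t (Y n \<omega>)) \<longlonglongrightarrow> 1" by (rule tendsto_eventually)
  qed
qed simp_all

text \<open>\<open>W\<close> is beta distributed: the two Fatou bounds squeeze the distribution function,
  using right-continuity of the beta distribution function.\<close>
lemma W_cdf: "measure M {\<omega> \<in> space M. W \<omega> \<le> t} = measure \<beta> {..t}"
proof (rule antisym)
  have less: "measure M {\<omega> \<in> space M. W \<omega> < s} \<le> measure \<beta> {..s}" for s
    using emeasure_W_less[of s] by (simp add: emeasure_eq_measure beta.emeasure_eq_measure)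
  have "((\<lambda>s. measure \<beta> {..s}) \<longlongrightarrow> measure \<beta> {..t}) (at_right t)"
    using beta.cdf_is_right_cont[of t] by (simp add: continuous_within cdf_def)
  moreover have "eventually (\<lambda>s. measure M {\<omega> \<in> space M. W \<omega> \<le> t} \<le> measure \<beta> {..s}) (at_right t)"
  proof (rule eventually_at_rightI[of t "t + 1"])
    fix s assume "s \<in> {t<..<t + 1}"
    then have "measure M {\<omega> \<in> space M. W \<omega> \<le> t} \<le> measure M {\<omega> \<in> space M. W \<omega> < s}"
      by (intro finite_measure_mono) auto
    with less[of s] show "measure M {\<omega> \<in> space M. W \<omega> \<le> t} \<le> measure \<beta> {..s}" by simp
  qed simp
  ultimately show "measure M {\<omega> \<in> space M. W \<omega> \<le> t} \<le> measure \<beta> {..t}"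
    by (rule tendsto_lowerbound) simp
next
  have "ennreal (measure M {\<omega> \<in> space M. t < W \<omega>}) \<le> ennreal (1 - measure \<beta> {..t})"
    using emeasure_W_greater[of t]
    by (simp add: emeasure_eq_measure beta.emeasure_eq_measure ennreal_minus flip: ennreal_1)
  then have "measure M {\<omega> \<in> space M. t < W \<omega>} \<le> 1 - measure \<beta> {..t} \<or>
      measure M {\<omega> \<in> space M. t < W \<omega>} \<le> 0 \<and> 1 \<le> measure \<beta> {..t}"
    by (simp add: ennreal_le_iff2)
  then have "measure M {\<omega> \<in> space M. t < W \<omega>} \<le> 1 - measure \<beta> {..t}"
    using beta.prob_le_1[of "{..t}"] by auto
  moreover have "measure M {\<omega> \<in> space M. W \<omega> \<le> t} = 1 - measure M {\<omega> \<in> space M. t < W \<omega>}"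
  proof -
    have "space M - {\<omega> \<in> space M. t < W \<omega>} = {\<omega> \<in> space M. W \<omega> \<le> t}" by auto
    then show ?thesis using prob_compl[of "{\<omega> \<in> space M. t < W \<omega>}"] by simp
  qed
  ultimately show "measure \<beta> {..t} \<le> measure M {\<omega> \<in> space M. W \<omega> \<le> t}" by simp
qed

definition Zlim :: "'a \<Rightarrow> real" where "Zlim \<omega> = W \<omega> - 1/2"

lemma AE_Zr_converges: "AE \<omega> in M. (\<lambda>n. fst (Zr (\<lambda>k. X k \<omega>) n)) \<longlonglongrightarrow> Zlim \<omega>"
  using AE_collapsing by eventually_elim (simp add: collapsing_limits(3) Zlim_def flip: Y_def)

lemma measurable_Zlim[measurable]: "Zlim \<in> borel_measurable M"
  unfolding Zlim_def by measurable

lemma distributed_Zlim: "distributed M lborel Zlim (\<lambda>x. ennreal (f_dens \<delta> c x))"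
proof -
  have "distr M lborel Zlim = distr \<beta> lborel (\<lambda>w. w - 1/2)"
  proof (rule cdf_unique)
    show "real_distribution (distr M lborel Zlim)"
      by (auto simp: real_distribution_def real_distribution_axioms_def intro!: prob_space_distr)
    show "real_distribution (distr \<beta> lborel (\<lambda>w. w - 1/2))"
      by (auto simp: real_distribution_def real_distribution_axioms_def intro!: beta.prob_space_distr)
    show "cdf (distr M lborel Zlim) = cdf (distr \<beta> lborel (\<lambda>w. w - 1/2))"
    proof
      fix t :: real
      have "Zlim -` {..t} \<inter> space M = {\<omega> \<in> space M. W \<omega> \<le> t + 1/2}"
        by (auto simp: Zlim_def)
      then have "cdf (distr M lborel Zlim) t = measure M {\<omega> \<in> space M. W \<omega> \<le> t + 1/2}"
        by (simp add: cdf_def measure_distr)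
      also have "\<dots> = measure \<beta> {..t + 1/2}"
        by (rule W_cdf)
      also have "(\<lambda>w. w - 1/2) -` {..t} \<inter> space \<beta> = {..t + 1/2}"
        by auto
      then have "measure \<beta> {..t + 1/2} = cdf (distr \<beta> lborel (\<lambda>w. w - 1/2)) t"
        by (simp add: cdf_def measure_distr)
      finally show "cdf (distr M lborel Zlim) t = cdf (distr \<beta> lborel (\<lambda>w. w - 1/2)) t" .
    qed
  qed
  moreover have "(\<lambda>x. ennreal (f_dens \<delta> c x)) \<in> borel_measurable borel"
    unfolding f_dens_def by measurable
  ultimately show ?thesis
    by (simp add: distributed_def density_f_dens)
qed

end

theorem theorem2:
  fixes M :: "'a measure" and X :: "nat \<Rightarrow> 'a \<Rightarrow> real" and c \<delta> :: real
  assumes "prob_space M"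
    and "0 < c" "c < 1" "0 < \<delta>"
    and "\<And>n. n \<ge> 1 \<Longrightarrow> X n \<in> borel_measurable M"
    and "prob_space.indep_vars M (\<lambda>_. borel) X {1..}"
    and "\<And>n t. n \<ge> 1 \<Longrightarrow> measure M {\<omega> \<in> space M. X n \<omega> \<le> t} = Fdist c \<delta> t"
  shows "\<exists>Z. Z \<in> borel_measurable M
           \<and> (AE \<omega> in M. (\<lambda>n. fst (Zr (\<lambda>k. X k \<omega>) n)) \<longlonglongrightarrow> Z \<omega>)
           \<and> distributed M lborel Z (\<lambda>x. ennreal (f_dens \<delta> c x))"
proof -
  have "recursion M c \<delta> X"
    unfolding recursion_def recursion_axioms_def params_def using assms by auto
  then interpret recursion M c \<delta> X .
  show ?thesis
    by (intro exI[of _ Zlim] conjI measurable_Zlim AE_Zr_converges distributed_Zlim)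
qed

end
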